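(* Let $K\in{\rm Alg}(V)$ be a cubic cyclic Galois field extension of $F$ with ${\rm Gal}(K/F)=\langle\tau\rangle$, and let $A$ be an $F$-algebra with $A\cong K^{(f,g)}$ for some $(f,g)\in{\rm Gl}(V)\times{\rm Gl}(V)$ (equivalently, a $3$-dimensional regular algebra, necessarily a division algebra, whose unital heart is $K$). Then $A$ is isomorphic to an algebra of one of the following eight types, where always $g\in{\rm Gl}(V)$: (1) $K^{({\rm id}+L(y_1)\tau+L(y_2)\tau^2,\,g)}$ with $y_1\in M$, $y_2\in K^\times$, $N(y_1)+N(y_2)-T(\tau(y_1)\tau^2(y_2))\ne-1$; (2) $K^{({\rm id}+L(y_2)\tau^2,\,g)}$ with $y_2\in M$, $N(y_2)\ne-1$; (3) $K^{({\rm id}+L(y_1)\tau,\,g)}$ with $y_1\in M$, $N(y_1)\ne-1$; (4) $K^{({\rm id},\,g)}$ with $g=L(x_1)\tau+L(x_2)\tau^2$, $x_i\in K$, $N_{A_0/F}(x_1t+x_2t^2)\ne0$; (5) $K^{({\rm id},\,g)}$ with $g={\rm id}+L(x_1)\tau+L(x_2)\tau^2$, $x_i\in K$, $N_{A_0/F}(1+x_1t+x_2t^2)\ne0$; (6) $K^{(L(y_1)\tau+L(y_2)\tau^2,\,g)}$ with $y_1\in M$, $y_2\in K^\times$, $N(y_2)\ne-N(y_1)$; (7) $K^{(L(y_2)\tau^2,\,g)}$ with $y_2\in M$; (8) $K^{(L(y_1)\tau,\,g)}$ with $y_1\in M$. Algebras belonging to different types are never isomorphic.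
   Context: $F$ is a field, $V$ a $3$-dimensional $F$-vector space, $K\in{\rm Alg}(V)$ an $F$-algebra structure on $V$ which is a field. $N=N_{K/F}$, $T=T_{K/F}$. $L(x)$ is the map $y\mapsto xy$. For $f,g\in{\rm End}_F(V)$, $K^{(f,g)}$ is $V$ with product $x\cdot y=f(x)g(y)$. $S(K)=\{x\in K:N(x)=1\}$ and $M\subseteq K^\times$ is a fixed set of representatives of $K^\times/S(K)$ containing $1$. $A_0=(K/F,\tau,1)$ is the cyclic algebra (free left $K$-module with basis $1,t,t^2$, $tx=\tau(x)t$, $t^3=1$) with reduced norm $N_{A_0/F}$. *)

theory Defs
  imports Main
begin

text \<open>The 3-dimensional F-vector space V is identified with the carrier
of the field K (a type of class field); the base field F is a subfield F of K
(the scalars c acting on V as c*x).\<close>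

definition is_subfield :: "'k::field set \<Rightarrow> bool" where
  "is_subfield F \<longleftrightarrow> 0 \<in> F \<and> 1 \<in> F \<and>
     (\<forall>a\<in>F. \<forall>b\<in>F. a + b \<in> F \<and> a * b \<in> F \<and> - a \<in> F) \<and>
     (\<forall>a\<in>F. a \<noteq> 0 \<longrightarrow> inverse a \<in> F)"

definition dim3_over :: "'k::field set \<Rightarrow> bool" where
  "dim3_over F \<longleftrightarrow> (\<exists>b1 b2 b3. \<forall>x. \<exists>!c. fst c \<in> F \<and> fst (snd c) \<in> F \<and> snd (snd c) \<in> F \<and>
       x = fst c * b1 + fst (snd c) * b2 + snd (snd c) * b3)"

definition F_linear :: "'k::field set \<Rightarrow> ('k \<Rightarrow> 'k) \<Rightarrow> bool" where
  "F_linear F f \<longleftrightarrow> (\<forall>x y. f (x + y) = f x + f y) \<and> (\<forall>c\<in>F. \<forall>x. f (c * x) = c * f x)"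

definition GL :: "'k::field set \<Rightarrow> ('k \<Rightarrow> 'k) set" where
  "GL F = {f. F_linear F f \<and> bij f}"

definition Gal :: "'k::field set \<Rightarrow> ('k \<Rightarrow> 'k) set" where
  "Gal F = {\<sigma>. bij \<sigma> \<and> (\<forall>x y. \<sigma> (x + y) = \<sigma> x + \<sigma> y) \<and> (\<forall>x y. \<sigma> (x * y) = \<sigma> x * \<sigma> y)
              \<and> \<sigma> 1 = 1 \<and> (\<forall>c\<in>F. \<sigma> c = c)}"

definition nrm :: "('k::field \<Rightarrow> 'k) \<Rightarrow> 'k \<Rightarrow> 'k" where
  "nrm \<tau> x = x * \<tau> x * \<tau> (\<tau> x)"

definition trc :: "('k::field \<Rightarrow> 'k) \<Rightarrow> 'k \<Rightarrow> 'k" where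
  "trc \<tau> x = x + \<tau> x + \<tau> (\<tau> x)"

definition Lm :: "'k::field \<Rightarrow> 'k \<Rightarrow> 'k" where
  "Lm a = (\<lambda>y. a * y)"

text \<open>M is a set of representatives of K^x / S(K) containing 1, S(K) = {x. N x = 1}.\<close>
definition reps :: "('k::field \<Rightarrow> 'k) \<Rightarrow> 'k set \<Rightarrow> bool" where
  "reps \<tau> M \<longleftrightarrow> 1 \<in> M \<and> 0 \<notin> M \<and>
     (\<forall>x. x \<noteq> 0 \<longrightarrow> (\<exists>!m. m \<in> M \<and> nrm \<tau> (x * inverse m) = 1))"

text \<open>Determinant of a 3x3 matrix (rows (a,b,c),(d,e,f),(g,h,i)).\<close>
definition det3 :: "'k::field \<Rightarrow> 'k \<Rightarrow> 'k \<Rightarrow> 'k \<Rightarrow> 'k \<Rightarrow> 'k \<Rightarrow> 'k \<Rightarrow> 'k \<Rightarrow> 'k \<Rightarrow> 'k" where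
  "det3 a b c d e f g h i = a*e*i + b*f*g + c*d*h - c*e*g - b*d*i - a*f*h"

text \<open>Reduced norm of x0 + x1 t + x2 t^2 in A0 = (K/F, tau, 1): the determinant of
the image under the standard splitting A0 \<otimes>_F K = M_3(K), i.e. of the matrix
rows (x0, x1, x2), (tau x2, tau x0, tau x1), (tau^2 x1, tau^2 x2, tau^2 x0).\<close>
definition nrd_A0 :: "('k::field \<Rightarrow> 'k) \<Rightarrow> 'k \<Rightarrow> 'k \<Rightarrow> 'k \<Rightarrow> 'k" where
  "nrd_A0 \<tau> x0 x1 x2 = det3 x0 x1 x2 (\<tau> x2) (\<tau> x0) (\<tau> x1)
                          (\<tau> (\<tau> x1)) (\<tau> (\<tau> x2)) (\<tau> (\<tau> x0))"

definition twist :: "('k::field \<Rightarrow> 'k) \<Rightarrow> ('k \<Rightarrow> 'k) \<Rightarrow> 'k \<Rightarrow> 'k \<Rightarrow> 'k" where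
  "twist f g = (\<lambda>x y. f x * g y)"

definition alg_iso :: "'k::field set \<Rightarrow> ('k \<Rightarrow> 'k \<Rightarrow> 'k) \<Rightarrow> ('k \<Rightarrow> 'k \<Rightarrow> 'k) \<Rightarrow> bool" where
  "alg_iso F m1 m2 \<longleftrightarrow> (\<exists>\<phi>. \<phi> \<in> GL F \<and> (\<forall>x y. \<phi> (m1 x y) = m2 (\<phi> x) (\<phi> y)))"

definition of_type :: "'k::field set \<Rightarrow> ('k \<Rightarrow> 'k) \<Rightarrow> 'k set \<Rightarrow> nat \<Rightarrow> ('k \<Rightarrow> 'k \<Rightarrow> 'k) \<Rightarrow> bool" where
  "of_type F \<tau> M i B \<longleftrightarrow> (\<exists>g \<in> GL F.
     (i = 1 \<and> (\<exists>y1 y2. y1 \<in> M \<and> y2 \<noteq> 0 \<and>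
        nrm \<tau> y1 + nrm \<tau> y2 - trc \<tau> (\<tau> y1 * \<tau> (\<tau> y2)) \<noteq> -1 \<and>
        B = twist (\<lambda>x. x + y1 * \<tau> x + y2 * \<tau> (\<tau> x)) g)) \<or>
     (i = 2 \<and> (\<exists>y2. y2 \<in> M \<and> nrm \<tau> y2 \<noteq> -1 \<and>
        B = twist (\<lambda>x. x + y2 * \<tau> (\<tau> x)) g)) \<or>
     (i = 3 \<and> (\<exists>y1. y1 \<in> M \<and> nrm \<tau> y1 \<noteq> -1 \<and>
        B = twist (\<lambda>x. x + y1 * \<tau> x) g)) \<or>
     (i = 4 \<and> (\<exists>x1 x2. g = (\<lambda>x. x1 * \<tau> x + x2 * \<tau> (\<tau> x)) \<and>
        nrd_A0 \<tau> 0 x1 x2 \<noteq> 0 \<and> B = twist id g)) \<or>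
     (i = 5 \<and> (\<exists>x1 x2. g = (\<lambda>x. x + x1 * \<tau> x + x2 * \<tau> (\<tau> x)) \<and>
        nrd_A0 \<tau> 1 x1 x2 \<noteq> 0 \<and> B = twist id g)) \<or>
     (i = 6 \<and> (\<exists>y1 y2. y1 \<in> M \<and> y2 \<noteq> 0 \<and> nrm \<tau> y2 \<noteq> - nrm \<tau> y1 \<and>
        B = twist (\<lambda>x. y1 * \<tau> x + y2 * \<tau> (\<tau> x)) g)) \<or>
     (i = 7 \<and> (\<exists>y2. y2 \<in> M \<and> B = twist (\<lambda>x. y2 * \<tau> (\<tau> x)) g)) \<or>
     (i = 8 \<and> (\<exists>y1. y1 \<in> M \<and> B = twist (\<lambda>x. y1 * \<tau> x) g)))"

end

theory Submission imports Defs begin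

text \<open>By Dedekind's independence of characters every F-linear endomorphism of K is uniquely
of the form L(a0) + L(a1)\<tau> + L(a2)\<tau>^2, i.e. End_F(K) is the cyclic algebra A0 with t
acting as \<tau>, and such a map is invertible iff the reduced norm of a0 + a1 t + a2 t^2 is
nonzero. Conjugating K^(f,g) by x \<mapsto> c x and moving a scalar \<alpha> from g to f changes the
coefficients of f into \<alpha> a_k / \<tau>^k(c); by Hilbert 90 the quotients c/\<tau>(c) exhaust the
elements of norm one, so a nonzero coefficient can be moved into the set M of norm
representatives.
Conversely, an isomorphism between algebras K^(f,g) is a scalar multiple of a Galois
automorphism, which commutes with \<tau>; comparing coefficients shows that the set of vanishing
coefficients of f, and for f = id that of the constant coefficient of g, is an isomorphism
invariant, and it separates the eight types.\<close>

lemma linear_system3_solvable: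
  fixes m00 m01 m02 m10 m11 m12 m20 m21 m22 v0 v1 v2 :: "'a::field"
  assumes m00: "m00 \<noteq> 0"
    and inj: "\<And>a0 a1 a2. a0*m00+a1*m10+a2*m20 = 0 \<Longrightarrow> a0*m01+a1*m11+a2*m21 = 0 \<Longrightarrow>
              a0*m02+a1*m12+a2*m22 = 0 \<Longrightarrow> a0 = 0 \<and> a1 = 0 \<and> a2 = 0"
  shows "\<exists>a0 a1 a2. a0*m00+a1*m10+a2*m20 = v0 \<and> a0*m01+a1*m11+a2*m21 = v1 \<and>
                    a0*m02+a1*m12+a2*m22 = v2"
proof -
  define D where "D = det3 m00 m01 m02 m10 m11 m12 m20 m21 m22"
  define A00 where "A00 = m11*m22 - m12*m21"
  define A01 where "A01 = m02*m21 - m01*m22"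
  define A02 where "A02 = m01*m12 - m02*m11"
  define A10 where "A10 = m12*m20 - m10*m22"
  define A11 where "A11 = m00*m22 - m02*m20"
  define A12 where "A12 = m02*m10 - m00*m12"
  define A20 where "A20 = m10*m21 - m11*m20"
  define A21 where "A21 = m01*m20 - m00*m21"
  define A22 where "A22 = m00*m11 - m01*m10"
  note defs = D_def det3_def A00_def A01_def A02_def A10_def A11_def A12_def A20_def A21_def A22_def
  have i00: "A00*m00+A01*m10+A02*m20 = D" unfolding defs by algebra
  have i01: "A00*m01+A01*m11+A02*m21 = 0" unfolding defs by algebra
  have i02: "A00*m02+A01*m12+A02*m22 = 0" unfolding defs by algebra
  have i10: "A10*m00+A11*m10+A12*m20 = 0" unfolding defs by algebra
  have i11: "A10*m01+A11*m11+A12*m21 = D" unfolding defs by algebra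
  have i12: "A10*m02+A11*m12+A12*m22 = 0" unfolding defs by algebra
  have i20: "A20*m00+A21*m10+A22*m20 = 0" unfolding defs by algebra
  have i21: "A20*m01+A21*m11+A22*m21 = 0" unfolding defs by algebra
  have i22: "A20*m02+A21*m12+A22*m22 = D" unfolding defs by algebra
  have "D \<noteq> 0"
  proof
    assume D: "D = 0"
    \<comment> \<open>then the rows of the adjugate solve the homogeneous system, so they vanish\<close>
    have "A10 = 0 \<and> A11 = 0 \<and> A12 = 0" by (rule inj[OF i10 _ i12]) (simp add: i11 D)
    moreover have "A20 = 0 \<and> A21 = 0 \<and> A22 = 0" by (rule inj[OF i20 i21]) (simp add: i22 D)
    ultimately have "m10*m00+(-m00)*m10+0*m20 = 0" "m10*m01+(-m00)*m11+0*m21 = 0"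
      "m10*m02+(-m00)*m12+0*m22 = 0"
      unfolding A12_def A22_def by (simp_all add: algebra_simps)
    from inj[OF this] m00 show False by simp
  qed
  define x0 where "x0 = (v0*A00+v1*A10+v2*A20) * inverse D"
  define x1 where "x1 = (v0*A01+v1*A11+v2*A21) * inverse D"
  define x2 where "x2 = (v0*A02+v1*A12+v2*A22) * inverse D"
  have "x0*m00+x1*m10+x2*m20 = inverse D * (v0*(A00*m00+A01*m10+A02*m20)
      + v1*(A10*m00+A11*m10+A12*m20) + v2*(A20*m00+A21*m10+A22*m20))"
   and "x0*m01+x1*m11+x2*m21 = inverse D * (v0*(A00*m01+A01*m11+A02*m21)
      + v1*(A10*m01+A11*m11+A12*m21) + v2*(A20*m01+A21*m11+A22*m21))"
   and "x0*m02+x1*m12+x2*m22 = inverse D * (v0*(A00*m02+A01*m12+A02*m22)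
      + v1*(A10*m02+A11*m12+A12*m22) + v2*(A20*m02+A21*m12+A22*m22))"
    unfolding x0_def x1_def x2_def by algebra+
  hence "x0*m00+x1*m10+x2*m20 = v0 \<and> x0*m01+x1*m11+x2*m21 = v1 \<and> x0*m02+x1*m12+x2*m22 = v2"
    using \<open>D \<noteq> 0\<close> unfolding i00 i01 i02 i10 i11 i12 i20 i21 i22 by simp
  thus ?thesis by blast
qed

lemma dedekind_id_hom:
  fixes \<rho> :: "'k::field \<Rightarrow> 'k"
  assumes mult: "\<And>x y. \<rho> (x*y) = \<rho> x * \<rho> y" and one: "\<rho> 1 = 1"
    and ne: "\<rho> y0 \<noteq> y0"
    and h: "\<And>x. b0 * x + b1 * \<rho> x = 0"
  shows "b0 = 0 \<and> b1 = 0"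
proof -
  have e2: "b0 + b1 = 0" using h[of 1] one by simp
  have "b1 * (\<rho> y0 - y0) = (b0 * y0 + b1 * \<rho> y0) - (b0 + b1) * y0" by (simp add: algebra_simps)
  also have "\<dots> = 0" using h[of y0] e2 by simp
  finally have "b1 = 0" using ne by simp
  thus ?thesis using e2 by simp
qed

lemma bij_mult_left: "(c::'k::field) \<noteq> 0 \<Longrightarrow> bij (\<lambda>x. c*x)"
  by (rule bijI) (auto simp: inj_def intro!: surjI[of _ "\<lambda>x. x/c"])

lemma GL_comp: "f \<in> GL F \<Longrightarrow> g \<in> GL F \<Longrightarrow> f \<circ> g \<in> GL F"
  unfolding GL_def F_linear_def by (auto intro: bij_comp)

lemma GL_mult_left: "(c::'k::field) \<noteq> 0 \<Longrightarrow> (\<lambda>x. c*x) \<in> GL F"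
  unfolding GL_def F_linear_def by (simp add: bij_mult_left distrib_left mult.left_commute)

lemma GL_rescale:
  assumes "f \<in> GL F" "(c::'k::field) \<noteq> 0" "\<alpha> \<noteq> 0"
  shows "(\<lambda>x. \<alpha> * f (x/c)) \<in> GL F"
proof -
  have "(\<lambda>x. \<alpha> * f (x/c)) = (\<lambda>u. \<alpha>*u) \<circ> f \<circ> (\<lambda>x. inverse c * x)"
    by (rule ext) (simp add: divide_inverse mult.commute)
  thus ?thesis using assms by (simp add: GL_comp GL_mult_left)
qed

lemma GL_inv:
  assumes "f \<in> GL F" shows "inv f \<in> GL F"
proof -
  have l: "F_linear F f" and b: "bij f" using assms by (auto simp: GL_def)
  have fi: "f (inv f x) = x" for x using b by (simp add: bij_is_surj surj_f_inv_f)
  have if_: "inv f (f x) = x" for x using b by (simp add: bij_is_inj)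
  have "F_linear F (inv f)" unfolding F_linear_def
  proof (intro conjI allI ballI)
    fix x y show "inv f (x + y) = inv f x + inv f y"
      using l if_[of "inv f x + inv f y"] by (simp add: F_linear_def fi)
  next
    fix c x assume "c \<in> F" thus "inv f (c * x) = c * inv f x"
      using l if_[of "c * inv f x"] by (simp add: F_linear_def fi)
  qed
  thus ?thesis using b by (simp add: GL_def bij_imp_bij_inv)
qed

lemma alg_iso_trans: "alg_iso F A B \<Longrightarrow> alg_iso F B C \<Longrightarrow> alg_iso F A C"
  unfolding alg_iso_def by (metis GL_comp comp_apply)

lemma alg_iso_refl: "alg_iso F A A"
  unfolding alg_iso_def GL_def F_linear_def by (rule exI[of _ id]) simp

lemma alg_iso_rescale:
  assumes "(c::'k::field) \<noteq> 0" "\<alpha> \<noteq> 0"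
  shows "alg_iso F (twist f g) (twist (\<lambda>x. \<alpha> * f (x/c)) (\<lambda>x. (c/\<alpha>) * g (x/c)))"
  unfolding alg_iso_def twist_def
  by (rule exI[of _ "\<lambda>x. c*x"]) (use assms in \<open>auto simp: GL_mult_left\<close>)

lemma twist_iso_scaled_Gal:
  assumes phi: "\<phi> \<in> GL F" and H: "\<And>x y. \<phi> (f x * g y) = f' (\<phi> x) * g' (\<phi> y)"
    and bf: "bij f" and bg: "bij g"
  shows "\<exists>c \<beta> \<sigma>. c \<noteq> 0 \<and> \<beta> \<noteq> 0 \<and> \<sigma> \<in> Gal F \<and> (\<forall>x. \<phi> x = c * \<sigma> x) \<and>
                (\<forall>x. \<phi> (f x) = \<beta> * f' (\<phi> x))"
proof -
  have lin: "F_linear F \<phi>" and bphi: "bij \<phi>" using phi by (auto simp: GL_def)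
  have padd: "\<phi> (x + y) = \<phi> x + \<phi> y" for x y using lin by (simp add: F_linear_def)
  have phi0: "\<phi> 0 = 0" using padd[of 0 0] by (metis add_cancel_right_right)
  have fi: "f (inv f u) = u" for u using bf by (simp add: bij_is_surj surj_f_inv_f)
  have gi: "g (inv g u) = u" for u using bg by (simp add: bij_is_surj surj_f_inv_f)
  define A where "A u = f' (\<phi> (inv f u))" for u
  define B where "B v = g' (\<phi> (inv g v))" for v
  have HH: "\<phi> (u * v) = A u * B v" for u v using H[of "inv f u" "inv g v"] by (simp add: fi gi A_def B_def)
  define c where "c = \<phi> 1"
  have c: "c \<noteq> 0" using bphi phi0 c_def by (metis bij_is_inj injD one_neq_zero)
  have cAB: "c = A 1 * B 1" using HH[of 1 1] c_def by simp
  have A1: "A 1 \<noteq> 0" and B1: "B 1 \<noteq> 0" using c cAB by auto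
  define \<sigma> where "\<sigma> u = \<phi> u / c" for u
  have "\<sigma> (x * y) = \<sigma> x * \<sigma> y" for x y
  proof -
    have "\<sigma> (x*y) = A x * B y / c" by (simp add: \<sigma>_def HH)
    also have "\<dots> = (A x * B 1) * (A 1 * B y) / (c * c)"
      using A1 B1 unfolding cAB by (simp add: field_simps)
    also have "\<dots> = \<sigma> x * \<sigma> y" unfolding \<sigma>_def HH[of x 1, simplified] HH[of 1 y, simplified] by simp
    finally show ?thesis .
  qed
  moreover have "\<sigma> (x + y) = \<sigma> x + \<sigma> y" for x y by (simp add: \<sigma>_def padd add_divide_distrib)
  moreover have "\<sigma> 1 = 1" using c by (simp add: \<sigma>_def c_def)
  moreover have "k \<in> F \<Longrightarrow> \<sigma> k = k" for k
    using lin c by (simp add: \<sigma>_def c_def F_linear_def) (metis mult.right_neutral nonzero_mult_div_cancel_right)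
  moreover have "\<sigma> = (\<lambda>u. inverse c * u) \<circ> \<phi>"
    by (rule ext) (simp add: \<sigma>_def divide_inverse mult.commute)
  hence "bij \<sigma>" using bphi bij_mult_left[of "inverse c"] c by (simp add: bij_comp)
  ultimately have "\<sigma> \<in> Gal F" unfolding Gal_def by blast
  moreover have "\<phi> (f x) = B 1 * f' (\<phi> x)" for x
    using H[of x "inv g 1"] gi by (simp add: B_def mult.commute)
  moreover have "\<phi> x = c * \<sigma> x" for x using c by (simp add: \<sigma>_def)
  ultimately show ?thesis using c B1 by blast
qed

text \<open>The operator L(a0) + L(a1)\<tau> + L(a2)\<tau>^2, the image of a0 + a1 t + a2 t^2 \<in> A0.\<close>

definition skew_op :: "('k::field \<Rightarrow> 'k) \<Rightarrow> 'k \<Rightarrow> 'k \<Rightarrow> 'k \<Rightarrow> 'k \<Rightarrow> 'k" where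
  "skew_op t a0 a1 a2 = (\<lambda>x. a0 * x + a1 * t x + a2 * t (t x))"

definition type_support :: "nat \<Rightarrow> bool \<times> bool \<times> bool" where
  "type_support i = (if i = 1 then (True,True,True) else if i = 2 then (True,False,True)
     else if i = 3 then (True,True,False) else if i = 4 \<or> i = 5 then (True,False,False)
     else if i = 6 then (False,True,True) else if i = 7 then (False,False,True)
     else (False,True,False))"

lemma type_support_eq:
  assumes "i \<in> {1..8}" "j \<in> {1..8}" "type_support i = type_support j" "i \<noteq> j"
  shows "(i = 4 \<and> j = 5) \<or> (i = 5 \<and> j = 4)"
proof -
  have "i = 1 \<or> i = 2 \<or> i = 3 \<or> i = 4 \<or> i = 5 \<or> i = 6 \<or> i = 7 \<or> i = 8"
   and "j = 1 \<or> j = 2 \<or> j = 3 \<or> j = 4 \<or> j = 5 \<or> j = 6 \<or> j = 7 \<or> j = 8"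
    using assms(1,2) by auto
  with assms(3,4) show ?thesis by (elim disjE) (simp_all add: type_support_def)
qed

lemma card_le_2: "card {a, b} \<le> 2"
  by (simp add: card_insert_if)

locale cyclic_cubic =
  fixes F :: "'k::field set" and \<tau> :: "'k \<Rightarrow> 'k" and M :: "'k set"
  assumes subfield: "is_subfield F"
    and dim3: "dim3_over F"
    and tau_Gal: "\<tau> \<in> Gal F"
    and Gal_eq: "Gal F = {id, \<tau>, \<tau> \<circ> \<tau>}"
    and card_Gal: "card {id, \<tau>, \<tau> \<circ> \<tau>} = 3"
    and reps: "reps \<tau> M"
begin

lemma tau_add: "\<tau> (x + y) = \<tau> x + \<tau> y" using tau_Gal by (simp add: Gal_def)
lemma tau_mult: "\<tau> (x * y) = \<tau> x * \<tau> y" using tau_Gal by (simp add: Gal_def)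
lemma tau_one: "\<tau> 1 = 1" using tau_Gal by (simp add: Gal_def)
lemma tau_fixes_F: "c \<in> F \<Longrightarrow> \<tau> c = c" using tau_Gal by (simp add: Gal_def)
lemma tau_zero: "\<tau> 0 = 0" using tau_add[of 0 0] by (metis add_cancel_right_right)
lemma tau_inject: "\<tau> x = \<tau> y \<longleftrightarrow> x = y"
  using tau_Gal by (simp add: Gal_def bij_is_inj inj_eq)
lemma tau_eq_0_iff: "\<tau> x = 0 \<longleftrightarrow> x = 0" using tau_inject[of x 0] tau_zero by simp
lemma tau_diff: "\<tau> (x - y) = \<tau> x - \<tau> y" using tau_add[of "x-y" y] by (simp add: eq_diff_eq)

lemma tau_inverse: "\<tau> (inverse x) = inverse (\<tau> x)"
proof (cases "x = 0")
  case False
  have "\<tau> x * \<tau> (inverse x) = 1" using tau_mult[of x "inverse x"] False tau_one by simp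
  thus ?thesis by (rule inverse_unique[symmetric])
qed (simp add: tau_zero)

lemma tau_divide: "\<tau> (x / y) = \<tau> x / \<tau> y" by (simp add: divide_inverse tau_mult tau_inverse)

lemma tau_ne_id: "\<tau> \<noteq> id"
proof
  assume "\<tau> = id"
  hence "{id, \<tau>, \<tau> \<circ> \<tau>} = {id, \<tau>}" by simp
  thus False using card_Gal card_le_2[of id \<tau>] by simp
qed

lemma tau_sq_ne_id: "\<tau> \<circ> \<tau> \<noteq> id"
proof
  assume "\<tau> \<circ> \<tau> = id"
  hence "{id, \<tau>, \<tau> \<circ> \<tau>} = {id, \<tau>}" by auto
  thus False using card_Gal card_le_2[of id \<tau>] by simp
qed

lemma tau_cube: "\<tau> (\<tau> (\<tau> x)) = x"
proof -
  have "\<tau> \<circ> \<tau> \<circ> \<tau> \<in> Gal F" using tau_Gal unfolding Gal_def by (auto intro: bij_comp)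
  hence "\<tau> \<circ> \<tau> \<circ> \<tau> \<in> {id, \<tau>, \<tau> \<circ> \<tau>}" using Gal_eq by simp
  moreover have "\<tau> \<circ> \<tau> \<circ> \<tau> \<noteq> \<tau>"
  proof
    assume "\<tau> \<circ> \<tau> \<circ> \<tau> = \<tau>"
    hence "\<tau> (\<tau> y) = y" for y by (metis comp_apply tau_inject)
    thus False using tau_sq_ne_id by auto
  qed
  moreover have "\<tau> \<circ> \<tau> \<circ> \<tau> \<noteq> \<tau> \<circ> \<tau>"
  proof
    assume "\<tau> \<circ> \<tau> \<circ> \<tau> = \<tau> \<circ> \<tau>"
    hence "\<tau> y = y" for y by (metis comp_apply tau_inject)
    thus False using tau_ne_id by auto
  qed
  ultimately show ?thesis by (metis comp_apply id_apply insertE singletonD)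
qed

lemma Gal_commute_tau: "\<sigma> \<in> Gal F \<Longrightarrow> \<sigma> (\<tau> z) = \<tau> (\<sigma> z)"
  using Gal_eq by auto

lemma dedekind_independence:
  assumes h: "\<And>x. a0 * x + a1 * \<tau> x + a2 * \<tau> (\<tau> x) = 0"
  shows "a0 = 0 \<and> a1 = 0 \<and> a2 = 0"
proof -
  \<comment> \<open>eliminate the \<tau>^2-term by comparing h at x y with h at x multiplied by \<tau>^2(y)\<close>
  have step: "a0 * (y - \<tau> (\<tau> y)) * x + a1 * (\<tau> y - \<tau> (\<tau> y)) * \<tau> x = 0" for x y
  proof -
    have "a0 * (y - \<tau> (\<tau> y)) * x + a1 * (\<tau> y - \<tau> (\<tau> y)) * \<tau> x =
       (a0 * (x*y) + a1 * \<tau> (x*y) + a2 * \<tau> (\<tau> (x*y)))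
       - (a0 * x + a1 * \<tau> x + a2 * \<tau> (\<tau> x)) * \<tau> (\<tau> y)"
      by (simp add: tau_mult algebra_simps)
    thus ?thesis using h by simp
  qed
  obtain y0 where y0: "\<tau> y0 \<noteq> \<tau> (\<tau> y0)" using tau_ne_id by (metis eq_id_iff tau_inject)
  obtain z0 where z0: "\<tau> z0 \<noteq> z0" using tau_ne_id by (metis eq_id_iff)
  have "a1 * (\<tau> y0 - \<tau> (\<tau> y0)) = 0"
    using dedekind_id_hom[of \<tau> z0 "a0 * (y0 - \<tau> (\<tau> y0))"] tau_mult tau_one z0 step by blast
  hence a1: "a1 = 0" using y0 by simp
  obtain w0 where w0: "\<tau> (\<tau> w0) \<noteq> w0" using tau_sq_ne_id by (metis comp_apply eq_id_iff)
  have "a0 = 0 \<and> a2 = 0"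
    using dedekind_id_hom[of "\<lambda>x. \<tau> (\<tau> x)" w0 a0 a2] tau_mult tau_one w0 h a1 by simp
  thus ?thesis using a1 by simp
qed

abbreviation op :: "'k \<Rightarrow> 'k \<Rightarrow> 'k \<Rightarrow> 'k \<Rightarrow> 'k" where
  "op \<equiv> skew_op \<tau>"

lemma skew_op_inject: "op a0 a1 a2 = op b0 b1 b2 \<Longrightarrow> a0 = b0 \<and> a1 = b1 \<and> a2 = b2"
proof -
  assume e: "op a0 a1 a2 = op b0 b1 b2"
  have "(a0 - b0) * x + (a1 - b1) * \<tau> x + (a2 - b2) * \<tau> (\<tau> x) = op a0 a1 a2 x - op b0 b1 b2 x" for x
    unfolding skew_op_def by (simp add: algebra_simps)
  with e dedekind_independence[of "a0 - b0" "a1 - b1" "a2 - b2"] show ?thesis by simp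
qed

lemma F_linear_skew_op: "F_linear F (op a0 a1 a2)"
  unfolding F_linear_def skew_op_def by (simp add: tau_add tau_mult tau_fixes_F algebra_simps)

lemma skew_op_comp: "op a0 a1 a2 (op h0 h1 h2 x) =
   op (a0*h0 + a1*\<tau> h2 + a2*\<tau>(\<tau> h1)) (a0*h1 + a1*\<tau> h0 + a2*\<tau>(\<tau> h2))
      (a0*h2 + a1*\<tau> h1 + a2*\<tau>(\<tau> h0)) x"
  unfolding skew_op_def by (simp add: tau_add tau_mult tau_cube distrib_left) algebra

lemma skew_op_rescale:
  "(\<lambda>x. \<alpha> * op a0 a1 a2 (x/c)) = op (\<alpha>*a0/c) (\<alpha>*a1/\<tau> c) (\<alpha>*a2/\<tau> (\<tau> c))"
  by (rule ext) (simp only: skew_op_def tau_divide, simp add: divide_inverse algebra_simps)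

lemma basis_exists:
  "\<exists>b1 b2 b3. b1 \<noteq> 0 \<and> (\<forall>x. \<exists>c1\<in>F. \<exists>c2\<in>F. \<exists>c3\<in>F. x = c1*b1 + c2*b2 + c3*b3)"
proof -
  obtain b1 b2 b3 where H: "\<forall>x. \<exists>!c. fst c \<in> F \<and> fst (snd c) \<in> F \<and> snd (snd c) \<in> F \<and>
       x = fst c * b1 + fst (snd c) * b2 + snd (snd c) * b3"
    using dim3 unfolding dim3_over_def by blast
  have F01: "0 \<in> F" "1 \<in> F" using subfield unfolding is_subfield_def by auto
  have "b1 \<noteq> 0"
  proof
    assume "b1 = 0"
    \<comment> \<open>then 0 would have the two coordinate vectors (0,0,0) and (1,0,0)\<close>
    let ?P = "\<lambda>c. fst c \<in> F \<and> fst (snd c) \<in> F \<and> snd (snd c) \<in> F \<and>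
       (0::'k) = fst c * b1 + fst (snd c) * b2 + snd (snd c) * b3"
    have "\<exists>!c. ?P c" using H by blast
    moreover have "?P (0, 0, 0)" "?P (1, 0, 0)" using F01 \<open>b1 = 0\<close> by simp_all
    ultimately have "(0::'k, 0::'k, 0::'k) = (1, 0, 0)" by blast
    thus False by simp
  qed
  moreover have "\<exists>c1\<in>F. \<exists>c2\<in>F. \<exists>c3\<in>F. x = c1*b1 + c2*b2 + c3*b3" for x
    using H by (metis (no_types, lifting))
  ultimately show ?thesis by blast
qed

lemma F_linear_imp_skew_op:
  assumes l: "F_linear F f" shows "\<exists>a0 a1 a2. f = op a0 a1 a2"
proof -
  obtain b1 b2 b3 where b1: "b1 \<noteq> 0"
    and rep: "\<And>x. \<exists>c1\<in>F. \<exists>c2\<in>F. \<exists>c3\<in>F. x = c1*b1 + c2*b2 + c3*b3"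
    using basis_exists by blast
  have agree: "h x = h' x" if "F_linear F h" "F_linear F h'"
    and "h b1 = h' b1" "h b2 = h' b2" "h b3 = h' b3" for h h' x
  proof -
    obtain c1 c2 c3 where "c1 \<in> F" "c2 \<in> F" "c3 \<in> F" "x = c1*b1 + c2*b2 + c3*b3"
      using rep by blast
    with that show ?thesis unfolding F_linear_def by simp
  qed
  have "\<exists>a0 a1 a2. op a0 a1 a2 b1 = f b1 \<and> op a0 a1 a2 b2 = f b2 \<and> op a0 a1 a2 b3 = f b3"
    unfolding skew_op_def
  proof (rule linear_system3_solvable[OF b1])
    fix a0 a1 a2
    assume zero: "a0 * b1 + a1 * \<tau> b1 + a2 * \<tau> (\<tau> b1) = 0"
      "a0 * b2 + a1 * \<tau> b2 + a2 * \<tau> (\<tau> b2) = 0" "a0 * b3 + a1 * \<tau> b3 + a2 * \<tau> (\<tau> b3) = 0"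
    have "op a0 a1 a2 x = op 0 0 0 x" for x
      by (rule agree[OF F_linear_skew_op F_linear_skew_op]) (simp_all add: skew_op_def zero)
    thus "a0 = 0 \<and> a1 = 0 \<and> a2 = 0" by (intro dedekind_independence) (simp add: skew_op_def)
  qed
  then obtain a0 a1 a2 where a: "op a0 a1 a2 b1 = f b1" "op a0 a1 a2 b2 = f b2" "op a0 a1 a2 b3 = f b3"
    by blast
  have "f x = op a0 a1 a2 x" for x by (rule agree[OF l F_linear_skew_op]) (simp_all add: a)
  thus ?thesis by blast
qed

lemma nrd_A0_mult:
  "nrd_A0 \<tau> (a0*h0 + a1*\<tau> h2 + a2*\<tau>(\<tau> h1)) (a0*h1 + a1*\<tau> h0 + a2*\<tau>(\<tau> h2))
      (a0*h2 + a1*\<tau> h1 + a2*\<tau>(\<tau> h0))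
   = nrd_A0 \<tau> a0 a1 a2 * nrd_A0 \<tau> h0 h1 h2"
  unfolding nrd_A0_def det3_def by (simp only: tau_add tau_mult tau_cube) algebra

lemma nrd_A0_one: "nrd_A0 \<tau> 1 0 0 = 1"
  unfolding nrd_A0_def det3_def by (simp add: tau_zero tau_one)

text \<open>The witness is the adjugate of a0 + a1 t + a2 t^2 in A0.\<close>

lemma skew_op_adjugate:
  "\<exists>h0 h1 h2. \<forall>x. op a0 a1 a2 (op h0 h1 h2 x) = nrd_A0 \<tau> a0 a1 a2 * x \<and>
                  op h0 h1 h2 (op a0 a1 a2 x) = nrd_A0 \<tau> a0 a1 a2 * x"
proof (intro exI allI conjI)
  fix x
  let ?h0 = "\<tau> a0 * \<tau> (\<tau> a0) - \<tau> a1 * \<tau> (\<tau> a2)"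
  and ?h1 = "a2 * \<tau> (\<tau> a2) - a1 * \<tau> (\<tau> a0)" and ?h2 = "a1 * \<tau> a1 - a2 * \<tau> a0"
  show "op a0 a1 a2 (op ?h0 ?h1 ?h2 x) = nrd_A0 \<tau> a0 a1 a2 * x"
    unfolding skew_op_comp unfolding skew_op_def nrd_A0_def det3_def
    by (simp only: tau_add tau_mult tau_cube tau_diff) algebra
  show "op ?h0 ?h1 ?h2 (op a0 a1 a2 x) = nrd_A0 \<tau> a0 a1 a2 * x"
    unfolding skew_op_comp unfolding skew_op_def nrd_A0_def det3_def by algebra
qed

lemma bij_skew_op_iff: "bij (op a0 a1 a2) \<longleftrightarrow> nrd_A0 \<tau> a0 a1 a2 \<noteq> 0"
proof
  assume b: "bij (op a0 a1 a2)"
  hence "op a0 a1 a2 \<in> GL F" using F_linear_skew_op by (simp add: GL_def)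
  hence "inv (op a0 a1 a2) \<in> GL F" by (rule GL_inv)
  then obtain h0 h1 h2 where h: "inv (op a0 a1 a2) = op h0 h1 h2"
    using F_linear_imp_skew_op unfolding GL_def by blast
  have "op a0 a1 a2 (inv (op a0 a1 a2) x) = x" for x using b by (simp add: bij_is_surj surj_f_inv_f)
  hence "op (a0*h0 + a1*\<tau> h2 + a2*\<tau>(\<tau> h1)) (a0*h1 + a1*\<tau> h0 + a2*\<tau>(\<tau> h2))
      (a0*h2 + a1*\<tau> h1 + a2*\<tau>(\<tau> h0)) = op 1 0 0"
    unfolding h skew_op_comp[symmetric] by (auto simp: skew_op_def)
  from skew_op_inject[OF this] have "nrd_A0 \<tau> a0 a1 a2 * nrd_A0 \<tau> h0 h1 h2 = 1"
    using nrd_A0_mult[of a0 h0 a1 h2 a2 h1] nrd_A0_one by simp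
  thus "nrd_A0 \<tau> a0 a1 a2 \<noteq> 0" by auto
next
  assume n: "nrd_A0 \<tau> a0 a1 a2 \<noteq> 0"
  obtain h0 h1 h2 where h: "\<And>x. op a0 a1 a2 (op h0 h1 h2 x) = nrd_A0 \<tau> a0 a1 a2 * x"
    "\<And>x. op h0 h1 h2 (op a0 a1 a2 x) = nrd_A0 \<tau> a0 a1 a2 * x"
    using skew_op_adjugate by blast
  show "bij (op a0 a1 a2)"
  proof (rule bijI)
    show "inj (op a0 a1 a2)" by (rule injI) (metis h(2) n mult_cancel_left)
    show "surj (op a0 a1 a2)"
      by (rule surjI[of _ "\<lambda>x. op h0 h1 h2 (x / nrd_A0 \<tau> a0 a1 a2)"]) (simp add: h(1) n)
  qed
qed

lemma GL_skew_op_iff: "op a0 a1 a2 \<in> GL F \<longleftrightarrow> nrd_A0 \<tau> a0 a1 a2 \<noteq> 0"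
  using F_linear_skew_op bij_skew_op_iff by (simp add: GL_def)

lemma nrd_A0_1: "nrd_A0 \<tau> 1 y1 y2 = 1 + (nrm \<tau> y1 + nrm \<tau> y2 - trc \<tau> (\<tau> y1 * \<tau> (\<tau> y2)))"
  unfolding nrd_A0_def det3_def nrm_def trc_def by (simp only: tau_one tau_mult tau_cube) algebra

lemma nrd_A0_0: "nrd_A0 \<tau> 0 y1 y2 = nrm \<tau> y1 + nrm \<tau> y2"
  unfolding nrd_A0_def det3_def nrm_def by (simp add: tau_zero)

lemma nrm_zero: "nrm \<tau> 0 = 0" by (simp add: nrm_def)

lemma trc_zero: "trc \<tau> 0 = 0" by (simp add: trc_def tau_zero)

lemma nrm_eq_0_iff: "nrm \<tau> y = 0 \<longleftrightarrow> y = 0"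
  unfolding nrm_def by (simp add: tau_eq_0_iff)

lemma nrm_tau: "nrm \<tau> (\<tau> y) = nrm \<tau> y"
  unfolding nrm_def by (simp add: tau_cube algebra_simps)

lemma nrm_inverse: "nrm \<tau> (inverse x) = inverse (nrm \<tau> x)"
  unfolding nrm_def by (simp add: tau_inverse)

lemma one_in_M: "1 \<in> M" and M_nonzero: "m \<in> M \<Longrightarrow> m \<noteq> 0"
  using reps unfolding reps_def by auto

lemma hilbert90:
  assumes N: "nrm \<tau> s = 1" shows "\<exists>c. c \<noteq> 0 \<and> c = s * \<tau> c"
proof -
  \<comment> \<open>c is the Hilbert 90 resolvent x + s \<tau>(x) + s \<tau>(s) \<tau>^2(x), nonzero for some x by Dedekind\<close>
  obtain x where x: "op 1 s (s * \<tau> s) x \<noteq> 0"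
    using dedekind_independence[of 1 s "s * \<tau> s"] by (auto simp: skew_op_def)
  have "s * \<tau> (op 1 s (s * \<tau> s) x) = s * \<tau> x + s * \<tau> s * \<tau> (\<tau> x) + nrm \<tau> s * x"
    unfolding skew_op_def nrm_def by (simp only: tau_add tau_mult tau_cube tau_one) algebra
  also have "\<dots> = op 1 s (s * \<tau> s) x" using N by (simp add: skew_op_def)
  finally show ?thesis using x by metis
qed

lemma hilbert90_sq:
  assumes N: "nrm \<tau> s = 1" shows "\<exists>c. c \<noteq> 0 \<and> c = s * \<tau> (\<tau> c)"
proof -
  have "nrm \<tau> (inverse (\<tau> s)) = 1" using N by (simp add: nrm_inverse nrm_tau)
  then obtain c where c: "c \<noteq> 0" "c = inverse (\<tau> s) * \<tau> c" using hilbert90 by blast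
  hence "s \<noteq> 0" using N nrm_zero by auto
  hence "\<tau> (\<tau> (\<tau> c)) = \<tau> (\<tau> (\<tau> s * c))"
    using c(2) by (metis tau_eq_0_iff mult.assoc mult.left_neutral right_inverse)
  hence "c = s * \<tau> (\<tau> c)" by (simp add: tau_cube tau_mult)
  thus ?thesis using c(1) by blast
qed

lemma exists_norm_one_quotient: "u \<noteq> 0 \<Longrightarrow> \<exists>m. m \<in> M \<and> nrm \<tau> (m / u) = 1"
  using reps unfolding reps_def by (metis nrm_inverse inverse_divide divide_inverse inverse_1)

lemma exists_rep_tau:
  assumes "u \<noteq> 0" shows "\<exists>c m. c \<noteq> 0 \<and> m \<in> M \<and> c * u = m * \<tau> c"
proof -
  obtain m where m: "m \<in> M" "nrm \<tau> (m / u) = 1" using exists_norm_one_quotient assms by blast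
  then obtain c where "c \<noteq> 0" "c = m / u * \<tau> c" using hilbert90 by blast
  thus ?thesis using m(1) assms by (intro exI[of _ c] exI[of _ m]) (auto simp: field_simps)
qed

lemma exists_rep_tau_sq:
  assumes "u \<noteq> 0" shows "\<exists>c m. c \<noteq> 0 \<and> m \<in> M \<and> c * u = m * \<tau> (\<tau> c)"
proof -
  obtain m where m: "m \<in> M" "nrm \<tau> (m / u) = 1" using exists_norm_one_quotient assms by blast
  then obtain c where "c \<noteq> 0" "c = m / u * \<tau> (\<tau> c)" using hilbert90_sq by blast
  thus ?thesis using m(1) assms by (intro exI[of _ c] exI[of _ m]) (auto simp: field_simps)
qed

lemma skew_op_id: "op 1 0 0 = id"
  by (rule ext) (simp add: skew_op_def tau_zero)

lemma of_type_1I: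
  "g \<in> GL F \<Longrightarrow> y1 \<in> M \<Longrightarrow> y2 \<noteq> 0 \<Longrightarrow> op 1 y1 y2 \<in> GL F \<Longrightarrow>
   of_type F \<tau> M 1 (twist (op 1 y1 y2) g)"
  unfolding of_type_def GL_skew_op_iff nrd_A0_1
  by (rule bexI[of _ g]) (auto simp: skew_op_def add_eq_0_iff)

lemma of_type_2I:
  "g \<in> GL F \<Longrightarrow> y2 \<in> M \<Longrightarrow> op 1 0 y2 \<in> GL F \<Longrightarrow> of_type F \<tau> M 2 (twist (op 1 0 y2) g)"
  unfolding of_type_def GL_skew_op_iff nrd_A0_1
  by (rule bexI[of _ g]) (auto simp: skew_op_def add_eq_0_iff nrm_zero trc_zero tau_zero)

lemma of_type_3I:
  "g \<in> GL F \<Longrightarrow> y1 \<in> M \<Longrightarrow> op 1 y1 0 \<in> GL F \<Longrightarrow> of_type F \<tau> M 3 (twist (op 1 y1 0) g)"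
  unfolding of_type_def GL_skew_op_iff nrd_A0_1
  by (rule bexI[of _ g]) (auto simp: skew_op_def add_eq_0_iff nrm_zero trc_zero tau_zero)

lemma of_type_4I: "op 0 x1 x2 \<in> GL F \<Longrightarrow> of_type F \<tau> M 4 (twist (op 1 0 0) (op 0 x1 x2))"
  using GL_skew_op_iff[of 0 x1 x2] unfolding of_type_def skew_op_id
  by (intro bexI[of _ "op 0 x1 x2"]) (auto simp: skew_op_def)

lemma of_type_5I: "op 1 x1 x2 \<in> GL F \<Longrightarrow> of_type F \<tau> M 5 (twist (op 1 0 0) (op 1 x1 x2))"
  using GL_skew_op_iff[of 1 x1 x2] unfolding of_type_def skew_op_id
  by (intro bexI[of _ "op 1 x1 x2"]) (auto simp: skew_op_def)

lemma of_type_6I: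
  "g \<in> GL F \<Longrightarrow> y1 \<in> M \<Longrightarrow> y2 \<noteq> 0 \<Longrightarrow> op 0 y1 y2 \<in> GL F \<Longrightarrow>
   of_type F \<tau> M 6 (twist (op 0 y1 y2) g)"
  unfolding of_type_def GL_skew_op_iff nrd_A0_0
  by (rule bexI[of _ g]) (auto simp: skew_op_def add_eq_0_iff)

lemma of_type_7I: "g \<in> GL F \<Longrightarrow> y2 \<in> M \<Longrightarrow> of_type F \<tau> M 7 (twist (op 0 0 y2) g)"
  unfolding of_type_def by (rule bexI[of _ g]) (auto simp: skew_op_def)

lemma of_type_8I: "g \<in> GL F \<Longrightarrow> y1 \<in> M \<Longrightarrow> of_type F \<tau> M 8 (twist (op 0 y1 0) g)"
  unfolding of_type_def by (rule bexI[of _ g]) (auto simp: skew_op_def)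

lemma of_type_support:
  assumes B: "of_type F \<tau> M i B" and i: "i \<in> {1..8}"
  shows "\<exists>a0 a1 a2 g. B = twist (op a0 a1 a2) g \<and> bij g \<and> bij (op a0 a1 a2) \<and>
           (a0 \<noteq> 0, a1 \<noteq> 0, a2 \<noteq> 0) = type_support i"
proof -
  have nf: "?thesis" if "B = twist (op a0 a1 a2) g" "g \<in> GL F" "nrd_A0 \<tau> a0 a1 a2 \<noteq> 0"
       "(a0 \<noteq> 0, a1 \<noteq> 0, a2 \<noteq> 0) = type_support i" for a0 a1 a2 g
    using that bij_skew_op_iff[of a0 a1 a2] unfolding GL_def
    by (intro exI[of _ a0] exI[of _ a1] exI[of _ a2] exI[of _ g]) simp
  note simps = M_nonzero skew_op_def nrd_A0_1 nrd_A0_0 add_eq_0_iff type_support_def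
    nrm_zero nrm_eq_0_iff trc_zero tau_zero
  consider "i = 1" | "i = 2" | "i = 3" | "i = 4 \<or> i = 5" | "i = 6" | "i = 7" | "i = 8"
    using i by force
  thus ?thesis
  proof cases
    case 1
    then obtain g y1 y2 where h: "g \<in> GL F" "y1 \<in> M" "y2 \<noteq> 0"
      "nrm \<tau> y1 + nrm \<tau> y2 - trc \<tau> (\<tau> y1 * \<tau> (\<tau> y2)) \<noteq> -1"
      "B = twist (\<lambda>x. x + y1 * \<tau> x + y2 * \<tau> (\<tau> x)) g" using B unfolding of_type_def by auto
    show ?thesis by (rule nf[of 1 y1 y2 g]) (simp_all add: h \<open>i = 1\<close> simps)
  next
    case 2
    then obtain g y2 where h: "g \<in> GL F" "y2 \<in> M" "nrm \<tau> y2 \<noteq> -1"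
      "B = twist (\<lambda>x. x + y2 * \<tau> (\<tau> x)) g" using B unfolding of_type_def by auto
    show ?thesis by (rule nf[of 1 0 y2 g]) (simp_all add: h \<open>i = 2\<close> simps)
  next
    case 3
    then obtain g y1 where h: "g \<in> GL F" "y1 \<in> M" "nrm \<tau> y1 \<noteq> -1"
      "B = twist (\<lambda>x. x + y1 * \<tau> x) g" using B unfolding of_type_def by auto
    show ?thesis by (rule nf[of 1 y1 0 g]) (simp_all add: h \<open>i = 3\<close> simps)
  next
    case 4
    then obtain g where h: "g \<in> GL F" "B = twist (op 1 0 0) g"
      using B unfolding of_type_def skew_op_id by auto
    show ?thesis by (rule nf[of 1 0 0 g]) (use 4 in \<open>auto simp: h nrd_A0_one type_support_def\<close>)
  next
    case 5
    then obtain g y1 y2 where h: "g \<in> GL F" "y1 \<in> M" "y2 \<noteq> 0" "nrm \<tau> y2 \<noteq> - nrm \<tau> y1"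
      "B = twist (\<lambda>x. y1 * \<tau> x + y2 * \<tau> (\<tau> x)) g" using B unfolding of_type_def by auto
    show ?thesis by (rule nf[of 0 y1 y2 g]) (simp_all add: h \<open>i = 6\<close> simps)
  next
    case 6
    then obtain g y2 where h: "g \<in> GL F" "y2 \<in> M" "B = twist (\<lambda>x. y2 * \<tau> (\<tau> x)) g"
      using B unfolding of_type_def by auto
    show ?thesis by (rule nf[of 0 0 y2 g]) (simp_all add: h \<open>i = 7\<close> simps)
  next
    case 7
    then obtain g y1 where h: "g \<in> GL F" "y1 \<in> M" "B = twist (\<lambda>x. y1 * \<tau> x) g"
      using B unfolding of_type_def by auto
    show ?thesis by (rule nf[of 0 y1 0 g]) (simp_all add: h \<open>i = 8\<close> simps)
  qed
qed

lemma of_type_4_5: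
  assumes B: "of_type F \<tau> M i B" and i: "i = 4 \<or> i = 5"
  shows "\<exists>u0 x1 x2. B = twist id (op u0 x1 x2) \<and> bij (op u0 x1 x2) \<and> (u0 = 0 \<longleftrightarrow> i = 4)"
proof -
  consider "i = 4" | "i = 5" using i by blast
  thus ?thesis
  proof cases
    case 1
    then obtain x1 x2 where "op 0 x1 x2 \<in> GL F" "B = twist (op 1 0 0) (op 0 x1 x2)"
      using B unfolding of_type_def skew_op_id by (auto simp: skew_op_def)
    thus ?thesis using 1 unfolding skew_op_id GL_def
      by (intro exI[of _ 0] exI[of _ x1] exI[of _ x2]) simp
  next
    case 2
    then obtain x1 x2 where "op 1 x1 x2 \<in> GL F" "B = twist (op 1 0 0) (op 1 x1 x2)"
      using B unfolding of_type_def skew_op_id by (auto simp: skew_op_def)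
    thus ?thesis using 2 unfolding skew_op_id GL_def
      by (intro exI[of _ 1] exI[of _ x1] exI[of _ x2]) simp
  qed
qed

text \<open>Comparing the coefficients of c \<sigma>(f(x)) = \<beta> f'(c \<sigma>(x)) by Dedekind, using that
\<sigma> commutes with \<tau>, gives \<beta> b_k \<tau>^k(c) = c \<sigma>(a_k).\<close>

lemma skew_op_support_invariant:
  assumes \<sigma>: "\<sigma> \<in> Gal F" and c: "c \<noteq> 0" and \<beta>: "\<beta> \<noteq> 0"
    and H: "\<And>x. c * \<sigma> (op a0 a1 a2 x) = \<beta> * op b0 b1 b2 (c * \<sigma> x)"
  shows "(a0 = 0 \<longleftrightarrow> b0 = 0) \<and> (a1 = 0 \<longleftrightarrow> b1 = 0) \<and> (a2 = 0 \<longleftrightarrow> b2 = 0)"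
proof -
  have sadd: "\<sigma> (x + y) = \<sigma> x + \<sigma> y" and smult: "\<sigma> (x * y) = \<sigma> x * \<sigma> y"
    and sbij: "bij \<sigma>" for x y using \<sigma> by (simp_all add: Gal_def)
  have "\<sigma> 0 = 0" using sadd[of 0 0] by (metis add_cancel_right_right)
  hence s0: "\<sigma> a = 0 \<longleftrightarrow> a = 0" for a using sbij by (metis bij_is_inj inj_eq)
  have "(\<beta>*b0*c - c*\<sigma> a0) * z + (\<beta>*b1*\<tau> c - c*\<sigma> a1) * \<tau> z
      + (\<beta>*b2*\<tau> (\<tau> c) - c*\<sigma> a2) * \<tau> (\<tau> z) = 0" for z
  proof -
    obtain x where z: "z = \<sigma> x" using sbij by (metis bij_is_surj surj_f_inv_f)
    have "c * (\<sigma> a0 * z + \<sigma> a1 * \<tau> z + \<sigma> a2 * \<tau> (\<tau> z)) =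
        \<beta> * (b0 * (c * z) + b1 * (\<tau> c * \<tau> z) + b2 * (\<tau> (\<tau> c) * \<tau> (\<tau> z)))"
      using H[of x] unfolding z skew_op_def by (simp only: sadd smult tau_mult Gal_commute_tau[OF \<sigma>])
    thus ?thesis by algebra
  qed
  from dedekind_independence[OF this]
  have "\<beta>*b0*c = c*\<sigma> a0" "\<beta>*b1*\<tau> c = c*\<sigma> a1" "\<beta>*b2*\<tau> (\<tau> c) = c*\<sigma> a2" by simp_all
  moreover have "\<tau> c \<noteq> 0" "\<tau> (\<tau> c) \<noteq> 0" using c by (simp_all add: tau_eq_0_iff)
  ultimately show ?thesis using c \<beta> s0[of a0] s0[of a1] s0[of a2] by auto
qed

lemma twist_iso_support:
  assumes "\<phi> \<in> GL F" and H: "\<And>x y. \<phi> (op a0 a1 a2 x * g y) = op b0 b1 b2 (\<phi> x) * g' (\<phi> y)"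
    and "bij (op a0 a1 a2)" "bij g"
  shows "(a0 = 0 \<longleftrightarrow> b0 = 0) \<and> (a1 = 0 \<longleftrightarrow> b1 = 0) \<and> (a2 = 0 \<longleftrightarrow> b2 = 0)"
proof -
  obtain c \<beta> \<sigma> where "c \<noteq> 0" "\<beta> \<noteq> 0" "\<sigma> \<in> Gal F" and \<phi>: "\<And>x. \<phi> x = c * \<sigma> x"
    and "\<And>x. \<phi> (op a0 a1 a2 x) = \<beta> * op b0 b1 b2 (\<phi> x)"
    using twist_iso_scaled_Gal[where \<phi> = \<phi> and f = "op a0 a1 a2" and g = g and f' = "op b0 b1 b2"
        and g' = g', OF assms] by blast
  thus ?thesis by (intro skew_op_support_invariant[of \<sigma> c \<beta>]) (simp_all add: \<phi>)
qed

lemma twist_id_iso_const_coeff: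
  assumes "alg_iso F (twist id (op u0 x1 x2)) (twist id (op v0 y1 y2))" "bij (op u0 x1 x2)"
  shows "u0 = 0 \<longleftrightarrow> v0 = 0"
proof -
  obtain \<phi> where \<phi>: "\<phi> \<in> GL F"
    and H: "\<And>x y. \<phi> (id x * op u0 x1 x2 y) = id (\<phi> x) * op v0 y1 y2 (\<phi> y)"
    using assms(1) unfolding alg_iso_def twist_def by blast
  \<comment> \<open>by commutativity, op u0 x1 x2 plays the role of f and id = op 1 0 0 that of g\<close>
  have "\<phi> (op u0 x1 x2 x * op 1 0 0 y) = op v0 y1 y2 (\<phi> x) * op 1 0 0 (\<phi> y)" for x y
    using H[of y x] unfolding skew_op_id id_apply by (simp only: mult.commute)
  from twist_iso_support[where \<phi> = \<phi> and g = "op 1 0 0" and g' = "op 1 0 0", OF \<phi> this assms(2)]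
  show ?thesis by (simp add: skew_op_id)
qed

lemma of_type_not_iso:
  assumes ij: "i \<in> {1..8}" "j \<in> {1..8}" "i \<noteq> j"
    and B1: "of_type F \<tau> M i B1" and B2: "of_type F \<tau> M j B2"
  shows "\<not> alg_iso F B1 B2"
proof
  assume iso: "alg_iso F B1 B2"
  then obtain \<phi> where \<phi>: "\<phi> \<in> GL F" and H: "\<And>x y. \<phi> (B1 x y) = B2 (\<phi> x) (\<phi> y)"
    unfolding alg_iso_def by blast
  obtain a0 a1 a2 g where a: "B1 = twist (op a0 a1 a2) g" "bij g" "bij (op a0 a1 a2)"
     "(a0 \<noteq> 0, a1 \<noteq> 0, a2 \<noteq> 0) = type_support i"
    using of_type_support[OF B1 ij(1)] by blast
  obtain b0 b1 b2 g' where b: "B2 = twist (op b0 b1 b2) g'"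
     "(b0 \<noteq> 0, b1 \<noteq> 0, b2 \<noteq> 0) = type_support j"
    using of_type_support[OF B2 ij(2)] by blast
  have "\<phi> (op a0 a1 a2 x * g y) = op b0 b1 b2 (\<phi> x) * g' (\<phi> y)" for x y
    using H[of x y] unfolding a(1) b(1) twist_def .
  from twist_iso_support[where \<phi> = \<phi> and g = g and g' = g', OF \<phi> this a(3,2)]
  have "type_support i = type_support j" using a(4) b(2) by auto
  hence ij45: "i = 4 \<or> i = 5" "j = 4 \<or> j = 5" using type_support_eq ij by blast+
  obtain u0 x1 x2 where u: "B1 = twist id (op u0 x1 x2)" "bij (op u0 x1 x2)" "u0 = 0 \<longleftrightarrow> i = 4"
    using of_type_4_5[OF B1 ij45(1)] by blast
  obtain v0 y1 y2 where v: "B2 = twist id (op v0 y1 y2)" "v0 = 0 \<longleftrightarrow> j = 4"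
    using of_type_4_5[OF B2 ij45(2)] by blast
  have "u0 = 0 \<longleftrightarrow> v0 = 0" using iso u(2) unfolding u(1) v(1) by (rule twist_id_iso_const_coeff)
  thus False using u(3) v(2) ij45 ij(3) by auto
qed

definition has_normal_form :: "('k \<Rightarrow> 'k \<Rightarrow> 'k) \<Rightarrow> bool" where
  "has_normal_form A \<longleftrightarrow> (\<exists>B. alg_iso F A B \<and> (\<exists>i\<in>{1..8}. of_type F \<tau> M i B))"

lemma has_normal_formI: "of_type F \<tau> M i B \<Longrightarrow> i \<in> {1..8} \<Longrightarrow> has_normal_form B"
  unfolding has_normal_form_def using alg_iso_refl by blast

lemma has_normal_form_iso: "alg_iso F A A' \<Longrightarrow> has_normal_form A' \<Longrightarrow> has_normal_form A"
  unfolding has_normal_form_def using alg_iso_trans by blast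

lemma has_normal_form_rescale:
  assumes "c \<noteq> 0" "\<alpha> \<noteq> 0"
    and "has_normal_form (twist (op (\<alpha>*a0/c) (\<alpha>*a1/\<tau> c) (\<alpha>*a2/\<tau> (\<tau> c))) (\<lambda>x. (c/\<alpha>) * g (x/c)))"
  shows "has_normal_form (twist (op a0 a1 a2) g)"
  using has_normal_form_iso[OF alg_iso_rescale[OF assms(1,2)]] assms(3) by (simp add: skew_op_rescale)

lemma GL_skew_op_rescale:
  "op a0 a1 a2 \<in> GL F \<Longrightarrow> c \<noteq> 0 \<Longrightarrow> \<alpha> \<noteq> 0 \<Longrightarrow> op (\<alpha>*a0/c) (\<alpha>*a1/\<tau> c) (\<alpha>*a2/\<tau> (\<tau> c)) \<in> GL F"
  using GL_rescale[of "op a0 a1 a2" F c \<alpha>] by (simp add: skew_op_rescale)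

lemma has_normal_form_a0_a1:
  assumes f: "op a0 a1 a2 \<in> GL F" and g: "g \<in> GL F" and a: "a0 \<noteq> 0" "a1 \<noteq> 0"
  shows "has_normal_form (twist (op a0 a1 a2) g)"
proof -
  obtain c m where c: "c \<noteq> 0" and m: "m \<in> M" and cm: "c * (a1 / a0) = m * \<tau> c"
    using exists_rep_tau[of "a1/a0"] a by auto
  define \<alpha> where "\<alpha> = c / a0"
  have \<alpha>: "\<alpha> \<noteq> 0" using c a by (simp add: \<alpha>_def)
  let ?y2 = "\<alpha>*a2/\<tau> (\<tau> c)" and ?g = "\<lambda>x. (c/\<alpha>) * g (x/c)"
  have "\<alpha>*a0/c = 1" using c a by (simp add: \<alpha>_def)
  moreover have "\<alpha>*a1/\<tau> c = m" using cm c a tau_eq_0_iff[of c] by (simp add: \<alpha>_def field_simps)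
  ultimately have f': "op (\<alpha>*a0/c) (\<alpha>*a1/\<tau> c) ?y2 = op 1 m ?y2" by simp
  have Gf: "op 1 m ?y2 \<in> GL F" using GL_skew_op_rescale[OF f c \<alpha>] unfolding f' .
  have Gg: "?g \<in> GL F" using c \<alpha> by (intro GL_rescale[OF g c]) simp
  have nf: "has_normal_form (twist (op 1 m ?y2) ?g)"
  proof (cases "a2 = 0")
    case True
    thus ?thesis using of_type_3I[OF Gg m] Gf has_normal_formI by simp
  next
    case False
    hence "?y2 \<noteq> 0" using \<alpha> c tau_eq_0_iff by simp
    thus ?thesis using of_type_1I[OF Gg m _ Gf] has_normal_formI by simp
  qed
  show ?thesis by (rule has_normal_form_rescale[OF c \<alpha>]) (unfold f', fact nf)
qed

lemma has_normal_form_a0_a2: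
  assumes f: "op a0 0 a2 \<in> GL F" and g: "g \<in> GL F" and a: "a0 \<noteq> 0" "a2 \<noteq> 0"
  shows "has_normal_form (twist (op a0 0 a2) g)"
proof -
  obtain c m where c: "c \<noteq> 0" and m: "m \<in> M" and cm: "c * (a2 / a0) = m * \<tau> (\<tau> c)"
    using exists_rep_tau_sq[of "a2/a0"] a by auto
  define \<alpha> where "\<alpha> = c / a0"
  have \<alpha>: "\<alpha> \<noteq> 0" using c a by (simp add: \<alpha>_def)
  let ?g = "\<lambda>x. (c/\<alpha>) * g (x/c)"
  have "\<alpha>*a0/c = 1" using c a by (simp add: \<alpha>_def)
  moreover have "\<alpha>*a2/\<tau> (\<tau> c) = m" using cm c a tau_eq_0_iff[of "\<tau> c"] tau_eq_0_iff[of c]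
    by (simp add: \<alpha>_def field_simps)
  ultimately have f': "op (\<alpha>*a0/c) (\<alpha>*0/\<tau> c) (\<alpha>*a2/\<tau> (\<tau> c)) = op 1 0 m" by simp
  have Gf: "op 1 0 m \<in> GL F" using GL_skew_op_rescale[OF f c \<alpha>] unfolding f' .
  have Gg: "?g \<in> GL F" using c \<alpha> by (intro GL_rescale[OF g c]) simp
  show ?thesis
    by (rule has_normal_form_rescale[OF c \<alpha>]) (unfold f', rule has_normal_formI[OF of_type_2I[OF Gg m Gf]], simp)
qed

lemma has_normal_form_scalar:
  assumes g: "g \<in> GL F" and a0: "a0 \<noteq> 0"
  shows "has_normal_form (twist (op a0 0 0) g)"
proof -
  obtain b0 b1 b2 where gb: "g = op b0 b1 b2"
    using F_linear_imp_skew_op g unfolding GL_def by blast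
  \<comment> \<open>the scaling c also normalises the constant coefficient of g to 1 when it is nonzero\<close>
  define c where "c = (if b0 = 0 then 1 else a0 * b0)"
  define \<alpha> where "\<alpha> = c / a0"
  have c: "c \<noteq> 0" using a0 by (simp add: c_def)
  have \<alpha>: "\<alpha> \<noteq> 0" using c a0 by (simp add: \<alpha>_def)
  let ?x1 = "a0*b1/\<tau> c" and ?x2 = "a0*b2/\<tau> (\<tau> c)"
  have f': "op (\<alpha>*a0/c) (\<alpha>*0/\<tau> c) (\<alpha>*0/\<tau> (\<tau> c)) = op 1 0 0" using c a0 by (simp add: \<alpha>_def)
  have g': "(\<lambda>x. (c/\<alpha>) * g (x/c)) = op (a0*b0/c) ?x1 ?x2"
    unfolding gb skew_op_rescale using a0 c by (simp add: \<alpha>_def)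
  have Gg: "op (a0*b0/c) ?x1 ?x2 \<in> GL F"
    unfolding g'[symmetric] using c \<alpha> by (intro GL_rescale[OF g c]) simp
  have nf: "has_normal_form (twist (op 1 0 0) (op (a0*b0/c) ?x1 ?x2))"
  proof (cases "b0 = 0")
    case True
    hence "op 0 ?x1 ?x2 \<in> GL F" using Gg by simp
    from has_normal_formI[OF of_type_4I[OF this]] True show ?thesis by simp
  next
    case False
    hence b0: "a0*b0/c = 1" using a0 by (simp add: c_def)
    hence "op 1 ?x1 ?x2 \<in> GL F" using Gg by simp
    from has_normal_formI[OF of_type_5I[OF this]] b0 show ?thesis by simp
  qed
  show ?thesis by (rule has_normal_form_rescale[OF c \<alpha>]) (unfold f' g', fact nf)
qed

lemma has_normal_form_a1:
  assumes f: "op 0 a1 a2 \<in> GL F" and g: "g \<in> GL F" and a1: "a1 \<noteq> 0"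
  shows "has_normal_form (twist (op 0 a1 a2) g)"
proof -
  define \<alpha> where "\<alpha> = 1 / a1"
  have \<alpha>: "\<alpha> \<noteq> 0" using a1 by (simp add: \<alpha>_def)
  let ?y2 = "a2/a1" and ?g = "\<lambda>x. (1/\<alpha>) * g (x/1)"
  have f': "op (\<alpha>*0/1) (\<alpha>*a1/\<tau> 1) (\<alpha>*a2/\<tau> (\<tau> 1)) = op 0 1 ?y2"
    using a1 by (simp add: \<alpha>_def tau_one)
  have Gf: "op 0 1 ?y2 \<in> GL F" using GL_skew_op_rescale[OF f one_neq_zero \<alpha>] unfolding f' .
  have Gg: "?g \<in> GL F" using \<alpha> by (intro GL_rescale[OF g one_neq_zero]) simp
  have nf: "has_normal_form (twist (op 0 1 ?y2) ?g)"
  proof (cases "a2 = 0")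
    case True
    thus ?thesis using of_type_8I[OF Gg one_in_M] has_normal_formI by simp
  next
    case False
    hence "?y2 \<noteq> 0" using a1 by simp
    thus ?thesis using of_type_6I[OF Gg one_in_M _ Gf] has_normal_formI by simp
  qed
  show ?thesis by (rule has_normal_form_rescale[OF one_neq_zero \<alpha>]) (unfold f', fact nf)
qed

lemma has_normal_form_a2:
  assumes f: "op 0 0 a2 \<in> GL F" and g: "g \<in> GL F"
  shows "has_normal_form (twist (op 0 0 a2) g)"
proof -
  have a2: "a2 \<noteq> 0" using f by (auto simp: GL_skew_op_iff nrd_A0_0 nrm_zero)
  define \<alpha> where "\<alpha> = 1 / a2"
  have \<alpha>: "\<alpha> \<noteq> 0" using a2 by (simp add: \<alpha>_def)
  let ?g = "\<lambda>x. (1/\<alpha>) * g (x/1)"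
  have f': "op (\<alpha>*0/1) (\<alpha>*0/\<tau> 1) (\<alpha>*a2/\<tau> (\<tau> 1)) = op 0 0 1"
    using a2 by (simp add: \<alpha>_def tau_one)
  have Gg: "?g \<in> GL F" using \<alpha> by (intro GL_rescale[OF g one_neq_zero]) simp
  show ?thesis
    by (rule has_normal_form_rescale[OF one_neq_zero \<alpha>])
      (unfold f', rule has_normal_formI[OF of_type_7I[OF Gg one_in_M]], simp)
qed

lemma twist_has_normal_form:
  assumes f: "f \<in> GL F" and g: "g \<in> GL F"
  shows "has_normal_form (twist f g)"
proof -
  obtain a0 a1 a2 where fa: "f = op a0 a1 a2"
    using F_linear_imp_skew_op f unfolding GL_def by blast
  note f = f[unfolded fa]
  consider "a0 = 0" "a1 \<noteq> 0" | "a0 = 0" "a1 = 0" | "a0 \<noteq> 0" "a1 \<noteq> 0"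
    | "a0 \<noteq> 0" "a1 = 0" "a2 \<noteq> 0" | "a0 \<noteq> 0" "a1 = 0" "a2 = 0" by blast
  hence "has_normal_form (twist (op a0 a1 a2) g)"
  proof cases
    case 1 with f g show ?thesis by (simp add: has_normal_form_a1)
  next
    case 2 with f g show ?thesis by (simp add: has_normal_form_a2)
  next
    case 3 with f g show ?thesis by (simp add: has_normal_form_a0_a1)
  next
    case 4 with f g show ?thesis by (simp add: has_normal_form_a0_a2)
  next
    case 5 with g show ?thesis by (simp add: has_normal_form_scalar)
  qed
  thus ?thesis unfolding fa .
qed

end

theorem mainTheorem15:
  fixes F :: "'k::field set" and \<tau> :: "'k \<Rightarrow> 'k" and M :: "'k set"
  assumes "is_subfield F"
    and "dim3_over F"
    and "\<tau> \<in> Gal F"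
    and "Gal F = {id, \<tau>, \<tau> \<circ> \<tau>}"
    and "card {id, \<tau>, \<tau> \<circ> \<tau>} = 3"
    and "reps \<tau> M"
  shows "(\<forall>f g A. f \<in> GL F \<and> g \<in> GL F \<and> alg_iso F A (twist f g) \<longrightarrow>
            (\<exists>B. alg_iso F A B \<and> (\<exists>i\<in>{1..8}. of_type F \<tau> M i B)))
       \<and> (\<forall>i j B1 B2. i \<in> {1..8} \<and> j \<in> {1..8} \<and> i \<noteq> j \<and>
            of_type F \<tau> M i B1 \<and> of_type F \<tau> M j B2 \<longrightarrow> \<not> alg_iso F B1 B2)"
proof -
  interpret cyclic_cubic F \<tau> M using assms by unfold_locales
  show ?thesis
  proof (intro conjI allI impI)
    fix f g A assume "f \<in> GL F \<and> g \<in> GL F \<and> alg_iso F A (twist f g)"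
    hence "alg_iso F A (twist f g)" "has_normal_form (twist f g)" using twist_has_normal_form by auto
    hence "has_normal_form A" by (rule has_normal_form_iso)
    thus "\<exists>B. alg_iso F A B \<and> (\<exists>i\<in>{1..8}. of_type F \<tau> M i B)"
      unfolding has_normal_form_def .
  next
    fix i j B1 B2
    assume "i \<in> {1..8} \<and> j \<in> {1..8} \<and> i \<noteq> j \<and> of_type F \<tau> M i B1 \<and> of_type F \<tau> M j B2"
    thus "\<not> alg_iso F B1 B2" using of_type_not_iso[of i j B1 B2] by blast
  qed
qed

end
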